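(* Let $\tilde\sigma=(g_1,\dots,g_T)\in\Sigma$, let $\tau\in[T-1]$, and let $\bar\sigma$ be the input obtained from $\tilde\sigma$ by interchanging $g_\tau$ and $g_{\tau+1}$. Then $$\eta_{OPT}(\tilde\sigma^{[1:\tau]})-\eta_{OPT}(\tilde\sigma^{[1:\tau-1]})\ \ge\ \eta_{OPT}(\bar\sigma^{[1:\tau+1]})-\eta_{OPT}(\bar\sigma^{[1:\tau]}).$$
   Context: Fix $\Delta>0$ and $0<m\le M$. Let $\mathcal G$ be the family of all functions $g:[0,\Delta]\to\mathbb{R}$ that are concave, increasing and differentiable on $[0,\Delta]$ with $g(0)=0$ and $g'(0)\in[m,M]$. An input is a finite sequence $\sigma=(g_1,\dots,g_T)$, $T\ge1$, $g_t\in\mathcal G$; $\Sigma$ is the set of all inputs. For $0\le t\le T$, $\sigma^{[1:t]}=(g_1,\dots,g_t)$ ($\sigma^{[1:0]}$ is empty). $\eta_{OPT}(\sigma^{[1:t]})$ denotes the optimal value of $\max\sum_{s=1}^t g_s(v_s)$ subject to $\sum_{s=1}^t v_s\le\Delta$, $v_s\ge0$; $\eta_{OPT}$ of the empty sequence is $0$. *)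

theory Defs
  imports "HOL-Analysis.Analysis"
begin

definition in_G :: "real \<Rightarrow> real \<Rightarrow> real \<Rightarrow> (real \<Rightarrow> real) \<Rightarrow> bool" where
  "in_G \<Delta> m M g \<longleftrightarrow>
     concave_on {0..\<Delta>} g \<and>
     mono_on {0..\<Delta>} g \<and>
     (\<forall>x\<in>{0..\<Delta>}. g differentiable (at x within {0..\<Delta>})) \<and>
     g 0 = 0 \<and>
     (\<exists>d. (g has_real_derivative d) (at 0 within {0..\<Delta>}) \<and> m \<le> d \<and> d \<le> M)"

text \<open>An input: a nonempty finite sequence of functions in G (list, position s is g_(s+1)).\<close>
definition is_input :: "real \<Rightarrow> real \<Rightarrow> real \<Rightarrow> (real \<Rightarrow> real) list \<Rightarrow> bool" where
  "is_input \<Delta> m M \<sigma> \<longleftrightarrow> \<sigma> \<noteq> [] \<and> (\<forall>g\<in>set \<sigma>. in_G \<Delta> m M g)"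

text \<open>Optimal value of max sum_s g_s(v_s) s.t. sum_s v_s <= Delta, v_s >= 0
(the supremum, which is attained; equals 0 for the empty sequence).\<close>
definition eta_OPT :: "real \<Rightarrow> (real \<Rightarrow> real) list \<Rightarrow> real" where
  "eta_OPT \<Delta> gs =
     Sup {(\<Sum>s<length gs. (gs ! s) (v s)) | v :: nat \<Rightarrow> real.
            (\<forall>s<length gs. v s \<ge> 0) \<and> (\<Sum>s<length gs. v s) \<le> \<Delta>}"

abbreviation prefix_seq :: "'a list \<Rightarrow> nat \<Rightarrow> 'a list" where
  "prefix_seq \<sigma> t \<equiv> take t \<sigma>"

text \<open>Interchange of g_tau and g_(tau+1) (1-indexed), i.e. list positions tau-1 and tau.\<close>
definition swap_adj :: "'a list \<Rightarrow> nat \<Rightarrow> 'a list" where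
  "swap_adj \<sigma> \<tau> = \<sigma>[\<tau> - 1 := \<sigma> ! \<tau>, \<tau> := \<sigma> ! (\<tau> - 1)]"

end

theory Submission
  imports Defs
begin

text \<open>Take feasible allocations v for A @ [b, a] and w for A. Interpolating their A-parts
  with weights 1 - l, l and l, 1 - l, and giving the last slot the amount v spends on a
  (resp. on b), yields allocations for A @ [a] and A @ [b]; a suitable l keeps both within
  the budget. By concavity the two interpolated A-parts are together worth at least the
  A-parts of v and w, so eta(A @ [b, a]) + eta(A) \<le> eta(A @ [a]) + eta(A @ [b]), which
  is the claimed inequality of marginal gains.\<close>

definition feasible_alloc :: "real \<Rightarrow> nat \<Rightarrow> (nat \<Rightarrow> real) \<Rightarrow> bool" where
  "feasible_alloc D n v \<longleftrightarrow> (\<forall>s<n. v s \<ge> 0) \<and> (\<Sum>s<n. v s) \<le> D"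

definition alloc_value :: "(real \<Rightarrow> real) list \<Rightarrow> (nat \<Rightarrow> real) \<Rightarrow> real" where
  "alloc_value gs v = (\<Sum>s<length gs. (gs ! s) (v s))"

lemma eta_OPT_eq_Sup_alloc_value:
  "eta_OPT D gs = Sup {alloc_value gs v | v. feasible_alloc D (length gs) v}"
  unfolding eta_OPT_def alloc_value_def feasible_alloc_def by simp

lemma feasible_alloc_in_range:
  assumes "feasible_alloc D n v" "s < n"
  shows "v s \<in> {0..D}"
proof -
  have "v s \<le> (\<Sum>s<n. v s)"
    by (rule member_le_sum) (use assms in \<open>auto simp: feasible_alloc_def\<close>)
  with assms show ?thesis by (auto simp: feasible_alloc_def)
qed

lemma bdd_above_alloc_values:
  assumes "\<forall>g\<in>set gs. mono_on {0..D} g"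
  shows "bdd_above {alloc_value gs v | v. feasible_alloc D (length gs) v}"
proof (rule bdd_aboveI)
  fix x assume "x \<in> {alloc_value gs v | v. feasible_alloc D (length gs) v}"
  then obtain v where x: "x = alloc_value gs v" and v: "feasible_alloc D (length gs) v"
    by auto
  have "alloc_value gs v \<le> (\<Sum>s<length gs. (gs ! s) D)"
    unfolding alloc_value_def
  proof (rule sum_mono)
    fix s assume "s \<in> {..<length gs}"
    then have "v s \<in> {0..D}" "mono_on {0..D} (gs ! s)"
      using assms feasible_alloc_in_range[OF v] by auto
    then show "(gs ! s) (v s) \<le> (gs ! s) D"
      by (auto intro: mono_onD)
  qed
  with x show "x \<le> (\<Sum>s<length gs. (gs ! s) D)" by simp
qed

lemma alloc_values_nonempty:
  "D \<ge> 0 \<Longrightarrow> {alloc_value gs v | v. feasible_alloc D (length gs) v} \<noteq> {}"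
  by (auto simp: feasible_alloc_def intro!: exI[of _ "\<lambda>_. 0"])

lemma alloc_value_le_eta_OPT:
  assumes "\<forall>g\<in>set gs. mono_on {0..D} g" "feasible_alloc D (length gs) v"
  shows "alloc_value gs v \<le> eta_OPT D gs"
  unfolding eta_OPT_eq_Sup_alloc_value
  using assms by (auto intro!: cSup_upper bdd_above_alloc_values)

lemma cSup_add_cSup_le:
  fixes S T :: "'a::{conditionally_complete_lattice, ordered_ab_group_add} set"
  assumes "S \<noteq> {}" "T \<noteq> {}" "\<And>x y. x \<in> S \<Longrightarrow> y \<in> T \<Longrightarrow> x + y \<le> c"
  shows "Sup S + Sup T \<le> c"
proof -
  have "Sup T \<le> c - Sup S"
  proof (rule cSup_least[OF assms(2)])
    fix y assume "y \<in> T"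
    then have "Sup S \<le> c - y"
      using assms(1,3) by (intro cSup_least) (auto simp: le_diff_eq)
    then show "y \<le> c - Sup S" by (simp add: le_diff_eq add.commute)
  qed
  then show ?thesis by (simp add: le_diff_eq add.commute)
qed

lemma concave_on_interpolate_pair:
  fixes g :: "real \<Rightarrow> real"
  assumes "concave_on {0..D} g" "u \<in> {0..D}" "w \<in> {0..D}" "0 \<le> l" "l \<le> 1"
  shows "g u + g w \<le> g ((1 - l) * u + l * w) + g (l * u + (1 - l) * w)"
proof -
  have "(1 - l) * g u + l * g w \<le> g ((1 - l) * u + l * w)"
    using concave_onD[OF assms(1,4,5,2,3)] by simp
  moreover have "l * g u + (1 - l) * g w \<le> g (l * u + (1 - l) * w)"
    using concave_onD[OF assms(1), of "1 - l" u w] assms by simp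
  ultimately show ?thesis by (simp add: algebra_simps)
qed

text \<open>Y and W are the budgets that v and w spend on the common part A; l moves
  part of W over to the first allocation, at most as much as b received.\<close>
lemma exists_budget_interpolation:
  fixes Y W x y D :: real
  assumes "Y + x + y \<le> D" "W \<le> D" "0 \<le> x" "0 \<le> y"
  obtains l where "0 \<le> l" "l \<le> 1"
    "(1 - l) * Y + l * W + y \<le> D" "l * Y + (1 - l) * W + x \<le> D"
proof (cases "W \<le> Y")
  case True
  with assms show ?thesis by (intro that[of 0]) auto
next
  case False
  show ?thesis
  proof (cases "x \<le> W - Y")
    case True
    define l where "l = x / (W - Y)"
    have "l * (W - Y) = x" using False by (simp add: l_def)
    moreover have "0 \<le> l" "l \<le> 1" using False True assms by (auto simp: l_def)
    ultimately show ?thesis using assms by (intro that[of l]) (auto simp: algebra_simps)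
  next
    case False
    with assms \<open>\<not> W \<le> Y\<close> show ?thesis by (intro that[of 1]) auto
  qed
qed

lemma alloc_value_append_interpolated_le:
  assumes concave: "\<forall>g\<in>set A. concave_on {0..D} g"
    and mono: "\<forall>g\<in>set (A @ [a, b]). mono_on {0..D} g"
    and v: "feasible_alloc D (length A + 2) v" and w: "feasible_alloc D (length A) w"
  shows "alloc_value (A @ [b, a]) v + alloc_value A w
           \<le> eta_OPT D (A @ [a]) + eta_OPT D (A @ [b])"
proof -
  let ?n = "length A"
  define Y where "Y = (\<Sum>s<?n. v s)"
  define W where "W = (\<Sum>s<?n. w s)"
  have "Y + v ?n + v (Suc ?n) \<le> D" "W \<le> D" "0 \<le> v ?n" "0 \<le> v (Suc ?n)"
    using v w by (auto simp: feasible_alloc_def Y_def W_def)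
  then obtain l where l: "0 \<le> l" "l \<le> 1"
    and budget: "(1 - l) * Y + l * W + v (Suc ?n) \<le> D" "l * Y + (1 - l) * W + v ?n \<le> D"
    by (rule exists_budget_interpolation)
  define p where "p = (\<lambda>s. if s < ?n then (1 - l) * v s + l * w s else v (Suc ?n))"
  define q where "q = (\<lambda>s. if s < ?n then l * v s + (1 - l) * w s else v ?n)"
  have v_range: "\<And>s. s < ?n \<Longrightarrow> v s \<in> {0..D}" and w_range: "\<And>s. s < ?n \<Longrightarrow> w s \<in> {0..D}"
    using feasible_alloc_in_range[OF v] feasible_alloc_in_range[OF w] by auto
  have "feasible_alloc D (length (A @ [a])) p" "feasible_alloc D (length (A @ [b])) q"
    using v_range w_range l budget v
    by (auto simp: feasible_alloc_def p_def q_def Y_def W_def sum.distrib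
        sum_distrib_left feasible_alloc_in_range)
  then have opt: "alloc_value (A @ [a]) p + alloc_value (A @ [b]) q
                    \<le> eta_OPT D (A @ [a]) + eta_OPT D (A @ [b])"
    using alloc_value_le_eta_OPT mono by (intro add_mono) auto
  have "(\<Sum>s<?n. (A ! s) (v s)) + (\<Sum>s<?n. (A ! s) (w s))
          \<le> (\<Sum>s<?n. (A ! s) ((1 - l) * v s + l * w s)) + (\<Sum>s<?n. (A ! s) (l * v s + (1 - l) * w s))"
    unfolding sum.distrib[symmetric]
    using concave v_range w_range l by (intro sum_mono concave_on_interpolate_pair) auto
  then have "alloc_value (A @ [b, a]) v + alloc_value A w
               \<le> alloc_value (A @ [a]) p + alloc_value (A @ [b]) q"
    by (simp add: alloc_value_def nth_append p_def q_def)
  with opt show ?thesis by linarith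
qed

lemma eta_OPT_exchange:
  assumes "D \<ge> 0"
    and "\<forall>g\<in>set A. concave_on {0..D} g" "\<forall>g\<in>set (A @ [a, b]). mono_on {0..D} g"
  shows "eta_OPT D (A @ [b, a]) + eta_OPT D A \<le> eta_OPT D (A @ [a]) + eta_OPT D (A @ [b])"
  unfolding eta_OPT_eq_Sup_alloc_value[of D "A @ [b, a]"] eta_OPT_eq_Sup_alloc_value[of D A]
  using assms
  by (intro cSup_add_cSup_le alloc_values_nonempty)
    (auto intro!: alloc_value_append_interpolated_le)

lemma take_swap_adj:
  assumes "Suc n < length xs"
  shows "take (Suc n) (swap_adj xs (Suc n)) = take n xs @ [xs ! Suc n]"
    and "take (Suc (Suc n)) (swap_adj xs (Suc n)) = take n xs @ [xs ! Suc n, xs ! n]"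
  using assms by (simp_all add: swap_adj_def take_Suc_conv_app_nth nth_list_update)

theorem lemma3:
  fixes \<Delta> m M :: real and \<sigma> :: "(real \<Rightarrow> real) list" and \<tau> :: nat
  assumes "\<Delta> > 0" and "0 < m" and "m \<le> M"
    and "is_input \<Delta> m M \<sigma>"
    and "1 \<le> \<tau>" and "\<tau> \<le> length \<sigma> - 1"
  shows "eta_OPT \<Delta> (prefix_seq \<sigma> \<tau>) - eta_OPT \<Delta> (prefix_seq \<sigma> (\<tau> - 1))
         \<ge> eta_OPT \<Delta> (prefix_seq (swap_adj \<sigma> \<tau>) (\<tau> + 1))
           - eta_OPT \<Delta> (prefix_seq (swap_adj \<sigma> \<tau>) \<tau>)"
proof -
  obtain n where \<tau>: "\<tau> = Suc n" using \<open>1 \<le> \<tau>\<close> by (cases \<tau>) auto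
  with assms(6) have len: "Suc n < length \<sigma>" by simp
  let ?A = "take n \<sigma>" and ?a = "\<sigma> ! n" and ?b = "\<sigma> ! Suc n"
  have "set (?A @ [?a, ?b]) \<subseteq> set \<sigma>"
    using len by (auto dest: in_set_takeD)
  then have "\<forall>g\<in>set (?A @ [?a, ?b]). concave_on {0..\<Delta>} g \<and> mono_on {0..\<Delta>} g"
    using assms(4) by (auto simp: is_input_def in_G_def)
  then have "eta_OPT \<Delta> (?A @ [?b, ?a]) + eta_OPT \<Delta> ?A
               \<le> eta_OPT \<Delta> (?A @ [?a]) + eta_OPT \<Delta> (?A @ [?b])"
    using \<open>\<Delta> > 0\<close> by (intro eta_OPT_exchange) auto
  moreover have "take (Suc n) \<sigma> = ?A @ [?a]"
    using len by (simp add: take_Suc_conv_app_nth)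
  ultimately show ?thesis
    using take_swap_adj[OF len] by (simp add: \<tau>)
qed

end
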